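(* Let $K\subset\mathbb{R}^m$ be a self-dual cone and $L\subset\mathbb{R}^m$ a proper cone. If $K$ is an $L$-isotone projection set and at least one of $\operatorname{int}(K)\cap L$ or $\operatorname{int}(K)\cap L^*$ is nonempty, then $K=A\mathbb{R}^m_+$ for some orthogonal $m\times m$ matrix $A$. Moreover, the only proper cones $L$ such that $\mathbb{R}^m_+$ is an $L$-isotone projection set are the orthants of the reference system, i.e. the cones $\{x\in\mathbb{R}^m:\varepsilon^i x^i\ge 0,\ i=1,\dots,m\}$ with $\varepsilon^i\in\{-1,1\}$.
   Context: $\mathbb{R}^m$ carries the standard inner product with a fixed Cartesian coordinate system, and $\mathbb{R}^m_+=\{x:x^i\ge 0,\ i=1,\dots,m\}$. A convex cone is a nonempty set $K$ with $K+K\subset K$, $tK\subset K$ for $t\ge0$; a proper cone is a closed convex cone that is pointed ($K\cap(-K)=\{0\}$) and generating ($K-K=\mathbb{R}^m$). The dual cone is $K^*=\{y:\langle x,y\rangle\ge0\ \forall x\in K\}$; $K$ is self-dual if $K=K^*$. For a cone $L$, $x\le_L y$ means $y-x\in L$. $P_D$ is the metric projection onto a nonempty closed convex set $D$; $D$ is an $L$-isotone projection set if $x\le_L y$ implies $P_Dx\le_L P_Dy$. *)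

theory Defs
  imports "HOL-Analysis.Analysis"
begin

definition convex_cone_set :: "('a::real_vector) set \<Rightarrow> bool" where
  "convex_cone_set K \<longleftrightarrow> K \<noteq> {} \<and> (\<forall>x\<in>K. \<forall>y\<in>K. x + y \<in> K)
      \<and> (\<forall>x\<in>K. \<forall>t::real. t \<ge> 0 \<longrightarrow> t *\<^sub>R x \<in> K)"

definition proper_cone :: "('a::real_normed_vector) set \<Rightarrow> bool" where
  "proper_cone K \<longleftrightarrow> convex_cone_set K \<and> closed K \<and> K \<inter> uminus ` K = {0}
      \<and> {x - y | x y. x \<in> K \<and> y \<in> K} = UNIV"

definition dual_cone :: "('a::real_inner) set \<Rightarrow> 'a set" where
  "dual_cone K = {y. \<forall>x\<in>K. inner x y \<ge> 0}"

definition self_dual :: "('a::real_inner) set \<Rightarrow> bool" where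
  "self_dual K \<longleftrightarrow> convex_cone_set K \<and> K = dual_cone K"

definition cone_le :: "('a::real_vector) set \<Rightarrow> 'a \<Rightarrow> 'a \<Rightarrow> bool" where
  "cone_le L x y \<longleftrightarrow> y - x \<in> L"

definition isotone_projection_set :: "('a::euclidean_space) set \<Rightarrow> 'a set \<Rightarrow> bool" where
  "isotone_projection_set D L \<longleftrightarrow> D \<noteq> {} \<and> closed D \<and> convex D
     \<and> (\<forall>x y. cone_le L x y \<longrightarrow> cone_le L (closest_point D x) (closest_point D y))"

definition nonneg_orthant :: "(real^'n) set" where
  "nonneg_orthant = {x. \<forall>i. x $ i \<ge> 0}"

end

theory Submission
  imports Defs
begin

text \<open>
  For a self-dual cone \<open>K\<close>, Moreau's decomposition reads \<open>x = P x - P (-x)\<close> with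
  \<open>P x \<bottom> P (-x)\<close>, and \<open>P (-x) = 0\<close> exactly when \<open>x \<in> K\<close>. Applying \<open>L\<close>-isotonicity to
  \<open>-w \<le>\<^sub>L 0\<close> and to \<open>c - y \<le>\<^sub>L c\<close>, together with an interior point of \<open>K\<close> lying in \<open>L\<close> or
  in \<open>L\<^sup>*\<close>, shows \<open>L = K\<close>. So \<open>P\<close> is \<open>K\<close>-isotone. Cut \<open>K\<close> by the hyperplane
  \<open>\<langle>x, u\<rangle> = 1\<close> through an interior point \<open>u\<close>; the resulting base is compact, so by
  Krein-Milman \<open>K\<close> is generated by its extreme points. For distinct extreme points \<open>e\<close>,
  \<open>f\<close>, isotonicity applied to \<open>e - f \<le>\<^sub>K e\<close> and \<open>f - e \<le>\<^sub>K f\<close> forces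
  \<open>P (e - f) = e\<close> and \<open>P (f - e) = f\<close>, hence \<open>\<langle>e, f\<rangle> = 0\<close>. A self-dual cone generated by
  \<open>m\<close> mutually orthogonal rays is an orthogonal image of \<open>\<real>\<^sup>m\<^sub>+\<close>.

  For the orthant, \<open>P x\<close> is the coordinatewise positive part; comparing \<open>P x\<close> and
  \<open>P (x + w)\<close> for suitable \<open>x\<close> shows that \<open>L\<close> contains the coordinate components of its
  elements, and a proper cone with this property is a sign orthant.
\<close>

lemma convex_cone_set_iff_convex_cone: "convex_cone_set K \<longleftrightarrow> convex_cone K"
proof -
  have "0 \<in> K" if "K \<noteq> {}" "\<forall>x\<in>K. \<forall>t::real. t \<ge> 0 \<longrightarrow> t *\<^sub>R x \<in> K"
    using that by (metis ex_in_conv order_refl scaleR_zero_left)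
  then show ?thesis
    unfolding convex_cone_set_def convex_cone_iff by blast
qed

lemma self_dual_imp_convex_cone: "self_dual K \<Longrightarrow> convex_cone K"
  unfolding self_dual_def convex_cone_set_iff_convex_cone by blast

lemma proper_cone_imp_convex_cone: "proper_cone K \<Longrightarrow> convex_cone K"
  unfolding proper_cone_def convex_cone_set_iff_convex_cone by blast

lemma convex_cone_sum:
  assumes "convex_cone K" "finite I" "\<And>i. i \<in> I \<Longrightarrow> f i \<in> K"
  shows "sum f I \<in> K"
  using assms(2,3)
  by (induction I rule: finite_induct)
    (simp_all add: convex_cone_contains_0 convex_cone_add assms(1))

lemma closed_dual_cone: "closed (dual_cone K)"
proof -
  have "dual_cone K = (\<Inter>x\<in>K. {y. inner x y \<ge> 0})"
    unfolding dual_cone_def by auto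
  then show ?thesis
    by (simp add: closed_INT closed_halfspace_ge)
qed

lemma self_dual_closed: "self_dual K \<Longrightarrow> closed K"
  unfolding self_dual_def by (metis closed_dual_cone)

lemma self_dual_inner_nonneg: "self_dual K \<Longrightarrow> x \<in> K \<Longrightarrow> y \<in> K \<Longrightarrow> 0 \<le> inner x y"
  unfolding self_dual_def dual_cone_def by blast

lemma self_dual_memI: "self_dual K \<Longrightarrow> (\<And>x. x \<in> K \<Longrightarrow> 0 \<le> inner x y) \<Longrightarrow> y \<in> K"
  unfolding self_dual_def dual_cone_def by blast

lemma convex_cone_interior_absorbing:
  fixes K :: "'a::real_normed_vector set"
  assumes "convex_cone K" "u \<in> interior K"
  obtains t where "t > 0" "t *\<^sub>R u + x \<in> K"
proof -
  obtain r where r: "r > 0" "cball u r \<subseteq> K"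
    using assms(2) mem_interior_cball by blast
  define t where "t = norm x / r + 1"
  have t: "t > 0" "norm x \<le> r * t"
    using r(1) by (simp_all add: t_def field_simps add_pos_nonneg)
  then have "u + x /\<^sub>R t \<in> cball u r"
    using r(1) by (simp add: dist_norm field_simps)
  then have "t *\<^sub>R (u + x /\<^sub>R t) \<in> K"
    using r(2) t(1) assms(1) convex_cone_scaleR by (metis less_le subsetD)
  then show ?thesis
    using that t(1) by (simp add: scaleR_add_right)
qed

lemma dual_cone_inner_interior_ge:
  assumes "u \<in> interior K"
  obtains r where "r > 0" "\<And>x. x \<in> dual_cone K \<Longrightarrow> r * norm x \<le> inner x u"
proof -
  obtain r where r: "r > 0" "cball u r \<subseteq> K"
    using assms mem_interior_cball by blast
  have "r * norm x \<le> inner x u" if x: "x \<in> dual_cone K" for x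
  proof (cases "x = 0")
    case False
    have "u - (r / norm x) *\<^sub>R x \<in> cball u r"
      using r(1) by (simp add: dist_norm)
    then have "0 \<le> inner (u - (r / norm x) *\<^sub>R x) x"
      using r(2) x unfolding dual_cone_def by blast
    also have "\<dots> = inner u x - (r / norm x) * (norm x)\<^sup>2"
      by (simp add: inner_diff_left power2_norm_eq_inner)
    also have "\<dots> = inner u x - r * norm x"
      using False by (simp add: power2_eq_square)
    finally show ?thesis
      by (simp add: inner_commute)
  qed simp
  then show ?thesis
    using that r(1) by blast
qed

lemma dual_cone_inner_interior_pos:
  assumes "u \<in> interior K" "x \<in> dual_cone K" "x \<noteq> 0"
  shows "0 < inner x u"
proof -
  obtain r where "r > 0" "r * norm x \<le> inner x u"
    using dual_cone_inner_interior_ge[OF assms(1)] assms(2) by metis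
  then show ?thesis
    using assms(3) by (smt (verit) mult_pos_pos zero_less_norm_iff)
qed

section \<open>Projections onto self-dual cones\<close>

lemma closest_point_eqI:
  fixes S :: "'a::euclidean_space set"
  assumes "convex S" "closed S" "p \<in> S" "\<And>c. c \<in> S \<Longrightarrow> inner (a - p) (c - p) \<le> 0"
  shows "closest_point S a = p"
proof -
  have "dist a p \<le> dist a c" if "c \<in> S" for c
  proof -
    have "(a - p) - (c - p) = a - c"
      by simp
    then have "2 * inner (a - p) (c - p) = (norm (a - p))\<^sup>2 + (norm (c - p))\<^sup>2 - (norm (a - c))\<^sup>2"
      using dot_norm_neg[of "a - p" "c - p"] by simp
    then have "(norm (a - p))\<^sup>2 \<le> (norm (a - c))\<^sup>2"
      using assms(4)[OF that] zero_le_power2[of "norm (c - p)"] by linarith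
    then have "norm (a - p) \<le> norm (a - c)"
      by (rule power2_le_imp_le) simp
    then show ?thesis
      by (simp add: dist_norm)
  qed
  then show ?thesis
    using closest_point_unique[OF assms(1-3)] by metis
qed

context
  fixes K :: "'a::euclidean_space set"
  assumes self_dual: "self_dual K"
begin

lemma self_dual_convex: "convex K"
  using self_dual_imp_convex_cone[OF self_dual] by (simp add: convex_cone_def)

lemma self_dual_closest_point_in: "closest_point K x \<in> K"
  using self_dual self_dual_closed self_dual_imp_convex_cone
  by (metis closest_point_in_set convex_cone_nonempty)

lemma self_dual_closest_point_orthogonal: "inner (closest_point K x) (closest_point K x - x) = 0"
proof -
  define p where "p = closest_point K x"
  have cone: "convex_cone K"
    using self_dual self_dual_imp_convex_cone by auto
  have dot: "inner (x - p) (c - p) \<le> 0" if "c \<in> K" for c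
    using closest_point_dot[OF self_dual_convex self_dual_closed[OF self_dual] that] p_def by blast
  have "inner (x - p) (0 - p) \<le> 0"
    using dot convex_cone_contains_0[OF cone] by blast
  moreover have "inner (x - p) (2 *\<^sub>R p - p) \<le> 0"
    using dot convex_cone_scaleR[OF cone _ self_dual_closest_point_in] p_def by simp
  ultimately have "inner (x - p) p = 0"
    by (simp add: scaleR_2 inner_diff_right)
  then show ?thesis
    unfolding p_def[symmetric] by (simp add: inner_diff_left inner_diff_right inner_commute)
qed

text \<open>Moreau's decomposition: \<open>x = P x - P (-x)\<close> with orthogonal summands, since \<open>K\<^sup>* = K\<close>.\<close>

lemma self_dual_closest_point_uminus: "closest_point K (-x) = closest_point K x - x"
proof -
  define p where "p = closest_point K x"
  have pK: "p \<in> K" and orth: "inner p (p - x) = 0"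
    using self_dual_closest_point_in self_dual_closest_point_orthogonal p_def by auto
  have "0 \<le> inner c (p - x)" if "c \<in> K" for c
  proof -
    have "inner (x - p) (c - p) \<le> 0"
      using closest_point_dot[OF self_dual_convex self_dual_closed[OF self_dual] that] p_def
      by blast
    then show ?thesis
      using orth by (simp add: inner_diff_left inner_diff_right inner_commute)
  qed
  then have "p - x \<in> K"
    using self_dual_memI[OF self_dual] by blast
  moreover have "inner (- x - (p - x)) (c - (p - x)) \<le> 0" if "c \<in> K" for c
    using self_dual_inner_nonneg[OF self_dual pK that] orth
    by (simp add: inner_diff_left inner_diff_right)
  ultimately show ?thesis
    using closest_point_eqI[OF self_dual_convex self_dual_closed[OF self_dual]] p_def
    by blast
qed

lemma self_dual_closest_point_uminus_eq_0_iff: "closest_point K (-x) = 0 \<longleftrightarrow> x \<in> K"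
  using self_dual_closest_point_uminus[of x] self_dual_closest_point_in[of x]
    closest_point_self[of x K]
  by auto

end

lemma isotone_projection_setD:
  "isotone_projection_set D L \<Longrightarrow> y - x \<in> L \<Longrightarrow> closest_point D y - closest_point D x \<in> L"
  unfolding isotone_projection_set_def cone_le_def by blast

lemma proper_cone_pointed: "proper_cone L \<Longrightarrow> x \<in> L \<Longrightarrow> -x \<in> L \<Longrightarrow> x = 0"
  unfolding proper_cone_def by (metis (no_types, lifting) IntI image_eqI minus_minus singletonD)

lemma proper_cone_generating:
  assumes "proper_cone L"
  obtains y z where "y \<in> L" "z \<in> L" "x = y - z"
proof -
  have "x \<in> {x - y | x y. x \<in> L \<and> y \<in> L}"
    using assms unfolding proper_cone_def by simp
  then show ?thesis
    using that by blast
qed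

context
  fixes K L :: "'a::euclidean_space set"
  assumes self_dual: "self_dual K" and isotone: "isotone_projection_set K L"
begin

lemma self_dual_isotone_memI:
  assumes "c \<in> K" "y \<in> L" "y - c \<in> K"
  shows "c \<in> L"
proof -
  have "closest_point K c - closest_point K (c - y) \<in> L"
    using isotone_projection_setD[OF isotone] assms(2) by simp
  moreover have "closest_point K (c - y) = 0"
    using self_dual_closest_point_uminus_eq_0_iff[OF self_dual, of "y - c"] assms(3) by simp
  ultimately show ?thesis
    using closest_point_self[OF assms(1)] by simp
qed

lemma self_dual_isotone_uminus_closest_point_uminus:
  assumes "w \<in> L"
  shows "- closest_point K (-w) \<in> L"
proof -
  have "closest_point K 0 - closest_point K (-w) \<in> L"
    using isotone_projection_setD[OF isotone] assms by simp
  moreover have "closest_point K 0 = 0"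
    using self_dual_closest_point_uminus_eq_0_iff[OF self_dual, of 0] self_dual
    by (simp add: convex_cone_contains_0 self_dual_imp_convex_cone)
  ultimately show ?thesis
    by simp
qed

lemma self_dual_isotone_eq_if_interior_Int:
  assumes "proper_cone L" "interior K \<inter> L \<noteq> {}"
  shows "L = K"
proof
  obtain u where u: "u \<in> interior K" "u \<in> L"
    using assms(2) by blast
  show "K \<subseteq> L"
  proof
    fix c assume "c \<in> K"
    obtain t where "t > 0" "t *\<^sub>R u + - c \<in> K"
      using convex_cone_interior_absorbing[OF self_dual_imp_convex_cone[OF self_dual] u(1)] .
    moreover have "t *\<^sub>R u \<in> L"
      using convex_cone_scaleR[OF proper_cone_imp_convex_cone[OF assms(1)] _ u(2)] \<open>t > 0\<close>
      by simp
    ultimately show "c \<in> L"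
      using self_dual_isotone_memI[OF \<open>c \<in> K\<close>, of "t *\<^sub>R u"] by simp
  qed
  show "L \<subseteq> K"
  proof
    fix w assume "w \<in> L"
    have "closest_point K (-w) \<in> L"
      using \<open>K \<subseteq> L\<close> self_dual_closest_point_in[OF self_dual] by blast
    then have "closest_point K (-w) = 0"
      using proper_cone_pointed[OF assms(1)]
        self_dual_isotone_uminus_closest_point_uminus[OF \<open>w \<in> L\<close>] by blast
    then show "w \<in> K"
      using self_dual_closest_point_uminus_eq_0_iff[OF self_dual] by blast
  qed
qed

lemma self_dual_isotone_eq_if_interior_Int_dual_cone:
  assumes "proper_cone L" "interior K \<inter> dual_cone L \<noteq> {}"
  shows "L = K"
proof
  obtain u where u: "u \<in> interior K" "u \<in> dual_cone L"
    using assms(2) by blast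
  show "L \<subseteq> K"
  proof
    fix w assume "w \<in> L"
    define v where "v = closest_point K (-w)"
    have "0 \<le> inner (-v) u"
      using self_dual_isotone_uminus_closest_point_uminus[OF \<open>w \<in> L\<close>] u(2)
      unfolding v_def dual_cone_def by blast
    moreover have "v \<in> dual_cone K"
      using self_dual self_dual_closest_point_in[OF self_dual] unfolding v_def self_dual_def by blast
    ultimately have "v = 0"
      using dual_cone_inner_interior_pos[OF u(1), of v] by (auto simp: not_less[symmetric])
    then show "w \<in> K"
      using self_dual_closest_point_uminus_eq_0_iff[OF self_dual, of w] by (simp add: v_def)
  qed
  show "K \<subseteq> L"
  proof
    fix c assume "c \<in> K"
    obtain y z where "y \<in> L" "z \<in> L" "c = y - z"
      using proper_cone_generating[OF assms(1)] .
    moreover have "y - c \<in> K"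
      using \<open>c = y - z\<close> \<open>z \<in> L\<close> \<open>L \<subseteq> K\<close> by (simp add: subset_iff)
    ultimately show "c \<in> L"
      using self_dual_isotone_memI[OF \<open>c \<in> K\<close>] by blast
  qed
qed

end

section \<open>Extreme rays of a self-dual cone with isotone projection\<close>

definition cone_base :: "'a::real_inner set \<Rightarrow> 'a \<Rightarrow> 'a set" where
  "cone_base K u = {x \<in> K. inner x u = 1}"

lemma convex_cone_base: "convex_cone K \<Longrightarrow> convex (cone_base K u)"
  unfolding convex_def cone_base_def
  by (auto simp: convex_cone_add convex_cone_scaleR inner_add_left)

lemma extreme_point_of_cone_base_ray:
  assumes cone: "convex_cone K" and pos: "\<And>x. x \<in> K \<Longrightarrow> x \<noteq> 0 \<Longrightarrow> 0 < inner x u"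
    and e: "e extreme_point_of cone_base K u" and "p \<in> K" "e - p \<in> K"
  shows "p = inner p u *\<^sub>R e"
proof -
  have eu: "inner e u = 1"
    using e unfolding extreme_point_of_def cone_base_def by blast
  consider "p = 0" | "p = e" | "p \<noteq> 0" "e - p \<noteq> 0"
    by force
  then show ?thesis
  proof cases
    case 3
    define t where "t = inner p u"
    have t: "0 < t" "t < 1"
      using pos[OF \<open>p \<in> K\<close> 3(1)] pos[OF \<open>e - p \<in> K\<close> 3(2)] eu
      by (simp_all add: t_def inner_diff_left)
    define a b where "a = p /\<^sub>R t" and "b = (e - p) /\<^sub>R (1 - t)"
    have "a \<in> cone_base K u" "b \<in> cone_base K u"
      using t convex_cone_scaleR[OF cone] \<open>p \<in> K\<close> \<open>e - p \<in> K\<close> eu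
      by (simp_all add: cone_base_def a_def b_def t_def inner_diff_left)
    have e_eq: "e = (1 - t) *\<^sub>R b + t *\<^sub>R a"
      using t by (simp add: a_def b_def)
    have "a = b"
    proof (rule ccontr)
      assume "a \<noteq> b"
      then have "e \<in> open_segment b a"
        unfolding in_segment using t e_eq by auto
      then show False
        using e \<open>a \<in> cone_base K u\<close> \<open>b \<in> cone_base K u\<close> unfolding extreme_point_of_def by blast
    qed
    then have "e = a"
      using e_eq by (simp add: algebra_simps)
    then show ?thesis
      using t by (simp add: a_def t_def)
  qed (use eu in auto)
qed

context
  fixes K :: "'a::euclidean_space set" and u :: 'a
  assumes self_dual: "self_dual K" and interior: "u \<in> interior K"
begin

lemma self_dual_inner_interior_pos: "x \<in> K \<Longrightarrow> x \<noteq> 0 \<Longrightarrow> 0 < inner x u"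
  using dual_cone_inner_interior_pos[OF interior] self_dual unfolding self_dual_def by blast

lemma compact_cone_base: "compact (cone_base K u)"
proof -
  obtain r where r: "r > 0" "\<And>x. x \<in> K \<Longrightarrow> r * norm x \<le> inner x u"
    using dual_cone_inner_interior_ge[OF interior] self_dual unfolding self_dual_def by metis
  then have "norm x \<le> 1 / r" if "x \<in> cone_base K u" for x
  proof -
    have "r * norm x \<le> 1"
      using that r(2)[of x] by (simp add: cone_base_def)
    then show ?thesis
      using r(1) by (simp add: field_simps)
  qed
  then have "bounded (cone_base K u)"
    unfolding bounded_iff by blast
  moreover have "cone_base K u = K \<inter> {x. inner u x = 1}"
    unfolding cone_base_def by (auto simp: inner_commute)
  then have "closed (cone_base K u)"
    using self_dual_closed[OF self_dual] by (simp add: closed_Int closed_hyperplane)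
  ultimately show ?thesis
    by (simp add: compact_eq_bounded_closed)
qed

lemma self_dual_subset_convex_cone_hull_extreme_points:
  "K \<subseteq> convex_cone hull {e. e extreme_point_of cone_base K u}"
proof
  fix x assume "x \<in> K"
  show "x \<in> convex_cone hull {e. e extreme_point_of cone_base K u}"
  proof (cases "x = 0")
    case False
    define t where "t = inner x u"
    have "t > 0"
      using self_dual_inner_interior_pos[OF \<open>x \<in> K\<close> False] by (simp add: t_def)
    then have "x /\<^sub>R t \<in> cone_base K u"
      using \<open>x \<in> K\<close> convex_cone_scaleR[OF self_dual_imp_convex_cone[OF self_dual]]
      by (simp add: cone_base_def t_def)
    also have "cone_base K u = convex hull {e. e extreme_point_of cone_base K u}"
      using Krein_Milman_Minkowski[OF compact_cone_base
          convex_cone_base[OF self_dual_imp_convex_cone[OF self_dual]]] .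
    finally have "t *\<^sub>R (x /\<^sub>R t) \<in> convex_cone hull {e. e extreme_point_of cone_base K u}"
      using convex_cone_hull_mul convex_hull_subset_convex_cone_hull \<open>t > 0\<close>
      by (metis less_le subsetD)
    then show ?thesis
      using \<open>t > 0\<close> by simp
  qed (simp add: convex_cone_hull_contains_0)
qed

lemma extreme_points_of_cone_base_orthogonal:
  assumes isotone: "isotone_projection_set K K"
    and e: "e extreme_point_of cone_base K u" and f: "f extreme_point_of cone_base K u"
    and "e \<noteq> f"
  shows "inner e f = 0"
proof -
  have eK: "e \<in> K" and fK: "f \<in> K" and eu: "inner e u = 1" and fu: "inner f u = 1"
    using e f unfolding extreme_point_of_def cone_base_def by auto
  have cone: "convex_cone K"
    using self_dual_imp_convex_cone[OF self_dual] .
  have ray: "p = inner p u *\<^sub>R g" if "g extreme_point_of cone_base K u" "p \<in> K" "g - p \<in> K" for g p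
    using extreme_point_of_cone_base_ray[OF cone self_dual_inner_interior_pos that] .
  define p q where "p = closest_point K (e - f)" and "q = closest_point K (f - e)"
  define l m where "l = inner p u" and "m = inner q u"
  have q_eq: "q = p - (e - f)"
    using self_dual_closest_point_uminus[OF self_dual, of "e - f"] by (simp add: p_def q_def)
  have "e - p \<in> K"
    using isotone_projection_setD[OF isotone, of e "e - f"] fK closest_point_self[OF eK]
    by (simp add: p_def)
  then have p_ray: "p = l *\<^sub>R e"
    using ray[OF e] self_dual_closest_point_in[OF self_dual] by (simp add: p_def l_def)
  have "f - q \<in> K"
    using isotone_projection_setD[OF isotone, of f "f - e"] eK closest_point_self[OF fK]
    by (simp add: q_def)
  then have q_ray: "q = m *\<^sub>R f"
    using ray[OF f] self_dual_closest_point_in[OF self_dual] by (simp add: q_def m_def)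
  have comb: "(1 - l) *\<^sub>R e = (1 - m) *\<^sub>R f"
    using q_eq unfolding p_ray q_ray by (simp add: algebra_simps)
  then have "inner ((1 - l) *\<^sub>R e) u = inner ((1 - m) *\<^sub>R f) u"
    by simp
  then have "1 - l = 1 - m"
    using eu fu by simp
  then have "l = 1" "m = 1"
    using comb \<open>e \<noteq> f\<close> by auto
  then have "p = e" "q = f"
    using p_ray q_ray by simp_all
  then show ?thesis
    using self_dual_closest_point_orthogonal[OF self_dual, of "e - f"] q_eq by (simp add: p_def)
qed

end

lemma self_dual_eq_dual_of_generators:
  assumes "self_dual K" "E \<subseteq> K" "K \<subseteq> convex_cone hull E"
  shows "K = {x. \<forall>e\<in>E. 0 \<le> inner e x}"
proof
  show "K \<subseteq> {x. \<forall>e\<in>E. 0 \<le> inner e x}"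
    using self_dual_inner_nonneg[OF assms(1)] assms(2) by blast
  show "{x. \<forall>e\<in>E. 0 \<le> inner e x} \<subseteq> K"
  proof clarify
    fix x assume x: "\<forall>e\<in>E. 0 \<le> inner e x"
    have "E \<subseteq> {c. 0 \<le> inner x c}"
      using x by (auto simp: inner_commute)
    then have "convex_cone hull E \<subseteq> {c. 0 \<le> inner x c}"
      by (rule hull_minimal) (rule convex_cone_halfspace_ge)
    then show "x \<in> K"
      using self_dual_memI[OF assms(1)] assms(3) by (force simp: inner_commute)
  qed
qed

lemma orthogonal_matrix_transpose_image_nonneg_orthant:
  fixes R :: "real^'n^'n"
  assumes "orthogonal_matrix R"
  shows "(\<lambda>x. transpose R *v x) ` nonneg_orthant = {x. \<forall>i. 0 \<le> inner (R $ i) x}"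
proof -
  have inv: "R ** transpose R = mat 1" "transpose R ** R = mat 1"
    using assms unfolding orthogonal_matrix_def by auto
  have "x \<in> (\<lambda>x. transpose R *v x) ` nonneg_orthant \<longleftrightarrow> R *v x \<in> nonneg_orthant" for x
  proof
    assume "x \<in> (\<lambda>x. transpose R *v x) ` nonneg_orthant"
    then obtain y where y: "y \<in> nonneg_orthant" "x = transpose R *v y"
      by blast
    then have "R *v x = (R ** transpose R) *v y"
      by (simp only: matrix_vector_mul_assoc)
    then show "R *v x \<in> nonneg_orthant"
      using inv(1) y(1) by simp
  next
    assume "R *v x \<in> nonneg_orthant"
    moreover have "transpose R *v (R *v x) = x"
      using inv(2) by (simp only: matrix_vector_mul_assoc matrix_vector_mul_lid)
    ultimately show "x \<in> (\<lambda>x. transpose R *v x) ` nonneg_orthant"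
      by (metis image_eqI)
  qed
  then show ?thesis
    by (auto simp: nonneg_orthant_def matrix_vector_mul_component)
qed

lemma orthogonal_matrix_image_nonneg_orthant_eq_dual:
  fixes E :: "(real^'n) set"
  assumes "pairwise orthogonal E" "0 \<notin> E" "finite E" "card E = CARD('n)"
  obtains A :: "real^'n^'n"
  where "orthogonal_matrix A" "(\<lambda>x. A *v x) ` nonneg_orthant = {x. \<forall>e\<in>E. 0 \<le> inner e x}"
proof -
  obtain g where g: "bij_betw g (UNIV :: 'n set) E"
    using finite_same_card_bij[OF finite_class.finite_UNIV assms(3)] assms(4) by auto
  then have gE: "g i \<in> E" for i
    using bij_betwE by blast
  then have g_nz: "g i \<noteq> 0" for i
    using assms(2) by metis
  define R :: "real^'n^'n" where "R = (\<chi> i. g i /\<^sub>R norm (g i))"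
  have rows: "row i R = g i /\<^sub>R norm (g i)" for i
    unfolding R_def row_def by (simp add: vec_lambda_eta)
  have "orthogonal_matrix R"
    unfolding orthogonal_matrix_orthonormal_rows rows
  proof (intro conjI allI impI)
    fix i show "norm (g i /\<^sub>R norm (g i)) = 1"
      using g_nz by simp
  next
    fix i j :: 'n assume "i \<noteq> j"
    then have "g i \<noteq> g j"
      using g unfolding bij_betw_def inj_on_def by blast
    then show "orthogonal (g i /\<^sub>R norm (g i)) (g j /\<^sub>R norm (g j))"
      using assms(1) gE unfolding pairwise_def by (simp add: orthogonal_clauses)
  qed
  moreover have "{x. \<forall>i. 0 \<le> inner (R $ i) x} = {x. \<forall>e\<in>E. 0 \<le> inner e x}"
  proof -
    have "0 \<le> inner (R $ i) x \<longleftrightarrow> 0 \<le> inner (g i) x" for i x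
      using g_nz mult_le_cancel_left_pos[of "inverse (norm (g i))" 0 "inner (g i) x"]
      by (simp add: R_def)
    moreover have "E = range g"
      using g by (simp add: bij_betw_def)
    ultimately show ?thesis
      by auto
  qed
  ultimately show ?thesis
    using that[of "transpose R"] orthogonal_matrix_transpose_image_nonneg_orthant[of R] by simp
qed

lemma self_dual_isotone_eq_orthant_image:
  fixes K :: "(real^'n) set"
  assumes self_dual: "self_dual K" and isotone: "isotone_projection_set K K"
    and u: "u \<in> interior K"
  obtains A :: "real^'n^'n" where "orthogonal_matrix A" "K = (\<lambda>x. A *v x) ` nonneg_orthant"
proof -
  define E where "E = {e. e extreme_point_of cone_base K u}"
  have EK: "E \<subseteq> K" and E0: "0 \<notin> E"
    unfolding E_def extreme_point_of_def cone_base_def by auto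
  have K_hull: "K \<subseteq> convex_cone hull E"
    using self_dual_subset_convex_cone_hull_extreme_points[OF self_dual u] by (simp add: E_def)
  have orth: "pairwise orthogonal E"
    using extreme_points_of_cone_base_orthogonal[OF self_dual u isotone]
    unfolding pairwise_def orthogonal_def E_def by blast
  then have indep: "independent E"
    using pairwise_orthogonal_independent E0 by blast
  have "convex_cone hull E \<subseteq> span E"
    by (rule hull_minimal[OF span_superset]) (rule convex_cone_span)
  then have "K \<subseteq> span E"
    using K_hull by blast
  have "x \<in> span E" for x
  proof -
    obtain t where "t > 0" "t *\<^sub>R u + x \<in> K"
      using convex_cone_interior_absorbing[OF self_dual_imp_convex_cone[OF self_dual] u] .
    moreover have "t *\<^sub>R u \<in> K"
      using convex_cone_scaleR[OF self_dual_imp_convex_cone[OF self_dual]] \<open>t > 0\<close>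
        interior_subset[of K] u by auto
    ultimately have "(t *\<^sub>R u + x) - t *\<^sub>R u \<in> span E"
      using \<open>K \<subseteq> span E\<close> span_diff by blast
    then show ?thesis
      by simp
  qed
  then have "span E = UNIV"
    by auto
  then have card: "card E = CARD('n)"
    using dim_span_eq_card_independent[OF indep] by simp
  have "finite E"
    using indep independent_bound by blast
  obtain A :: "real^'n^'n" where
    "orthogonal_matrix A" "(\<lambda>x. A *v x) ` nonneg_orthant = {x. \<forall>e\<in>E. 0 \<le> inner e x}"
    using orthogonal_matrix_image_nonneg_orthant_eq_dual[OF orth E0 \<open>finite E\<close> card] .
  then show ?thesis
    using that self_dual_eq_dual_of_generators[OF self_dual EK K_hull] by simp
qed

section \<open>Isotone projections onto the nonnegative orthant\<close>

lemma closed_nonneg_orthant: "closed nonneg_orthant"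
  unfolding nonneg_orthant_def by (rule closed_positive_orthant)

lemma convex_nonneg_orthant: "convex nonneg_orthant"
  unfolding nonneg_orthant_def by (rule convex_box_cart) (simp add: atLeast_def[symmetric])

lemma closest_point_nonneg_orthant:
  fixes x :: "real^'n"
  shows "closest_point nonneg_orthant x = (\<chi> i. max (x $ i) 0)"
proof (rule closest_point_eqI[OF convex_nonneg_orthant closed_nonneg_orthant])
  show "(\<chi> i. max (x $ i) 0) \<in> nonneg_orthant"
    unfolding nonneg_orthant_def by simp
next
  fix c :: "real^'n" assume c: "c \<in> nonneg_orthant"
  have "(x $ i - max (x $ i) 0) * (c $ i - max (x $ i) 0) \<le> 0" for i :: 'n
    using c unfolding nonneg_orthant_def by (cases "x $ i \<ge> 0") (auto simp: mult_nonpos_nonneg)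
  then show "inner (x - (\<chi> i. max (x $ i) 0)) (c - (\<chi> i. max (x $ i) 0)) \<le> 0"
    unfolding inner_vec_def by (simp add: sum_nonpos)
qed

text \<open>Comparing the projections of \<open>x\<close> and \<open>x + w\<close>, where \<open>x\<close> has the coordinate \<open>-w$i\<close> (if
  positive) at \<open>i\<close> and very negative coordinates elsewhere, isolates the \<open>i\<close>-th coordinate of \<open>w\<close>.\<close>

lemma isotone_projection_nonneg_orthant_coordinate:
  fixes w :: "real^'n"
  assumes "isotone_projection_set nonneg_orthant L" "w \<in> L"
  shows "(w $ i) *\<^sub>R axis i 1 \<in> L"
proof -
  define x :: "real^'n" where "x = (\<chi> j. if j = i then max (- w $ i) 0 else - (\<bar>w $ j\<bar> + 1))"
  have "(\<chi> j. max ((x + w) $ j) 0) - (\<chi> j. max (x $ j) 0) = (w $ i) *\<^sub>R axis i 1"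
    unfolding vec_eq_iff x_def by (auto simp: axis_def max_def)
  then show ?thesis
    using isotone_projection_setD[OF assms(1), of "x + w" x] assms(2)
    by (simp add: closest_point_nonneg_orthant)
qed

lemma proper_cone_coordinatewise_eq_orthant:
  fixes L :: "(real^'n) set"
  assumes proper: "proper_cone L" and coord: "\<And>w i. w \<in> L \<Longrightarrow> (w $ i) *\<^sub>R axis i 1 \<in> L"
  obtains \<epsilon> :: "'n \<Rightarrow> real"
  where "\<forall>i. \<epsilon> i \<in> {-1, 1}" "L = {x. \<forall>i. 0 \<le> \<epsilon> i * x $ i}"
proof -
  have cone: "convex_cone L"
    using proper_cone_imp_convex_cone[OF proper] .
  have "\<exists>s. s \<in> {-1, 1} \<and> s *\<^sub>R axis i 1 \<in> L" for i
  proof -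
    obtain y z where "y \<in> L" "z \<in> L" "axis i 1 = y - z"
      using proper_cone_generating[OF proper] .
    then obtain w where "w \<in> L" "w $ i \<noteq> 0"
      by (metis axis_nth diff_zero vector_minus_component zero_neq_one)
    then have "(1 / \<bar>w $ i\<bar>) *\<^sub>R ((w $ i) *\<^sub>R axis i 1) \<in> L"
      using convex_cone_scaleR[OF cone _ coord[OF \<open>w \<in> L\<close>, of i], of "1 / \<bar>w $ i\<bar>"] by simp
    then show ?thesis
      using \<open>w $ i \<noteq> 0\<close> by (intro exI[of _ "sgn (w $ i)"]) (auto simp: sgn_if)
  qed
  then obtain \<epsilon> where \<epsilon>: "\<And>i. \<epsilon> i \<in> {-1, 1}" "\<And>i. \<epsilon> i *\<^sub>R axis i 1 \<in> L"
    by metis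
  have "L = {x. \<forall>i. 0 \<le> \<epsilon> i * x $ i}"
  proof (intro equalityI subsetI CollectI allI)
    fix w i assume "w \<in> L"
    show "0 \<le> \<epsilon> i * w $ i"
    proof (rule ccontr)
      assume neg: "\<not> 0 \<le> \<epsilon> i * w $ i"
      then have "- ((w $ i) *\<^sub>R axis i 1) = \<bar>w $ i\<bar> *\<^sub>R (\<epsilon> i *\<^sub>R axis i 1)"
        using \<epsilon>(1)[of i] by (auto simp: abs_if)
      moreover have "\<bar>w $ i\<bar> *\<^sub>R (\<epsilon> i *\<^sub>R axis i 1) \<in> L"
        using convex_cone_scaleR[OF cone _ \<epsilon>(2)] by simp
      ultimately have "- ((w $ i) *\<^sub>R axis i 1) \<in> L"
        by metis
      then have "(w $ i) *\<^sub>R axis i (1::real) = 0"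
        using proper_cone_pointed[OF proper coord[OF \<open>w \<in> L\<close>]] by blast
      then show False
        using neg by (simp add: axis_eq_0_iff)
    qed
  next
    fix x :: "real^'n" assume x: "x \<in> {x. \<forall>i. 0 \<le> \<epsilon> i * x $ i}"
    have "x = (\<Sum>i\<in>UNIV. (x $ i) *\<^sub>R axis i 1)"
      using basis_expansion[of x] by (simp add: scalar_mult_eq_scaleR)
    also have "\<dots> = (\<Sum>i\<in>UNIV. (\<epsilon> i * x $ i) *\<^sub>R (\<epsilon> i *\<^sub>R axis i 1))"
    proof (rule sum.cong[OF refl])
      fix i
      have "(\<epsilon> i * x $ i) * \<epsilon> i = x $ i"
        using \<epsilon>(1)[of i] by auto
      then show "(x $ i) *\<^sub>R axis i 1 = (\<epsilon> i * x $ i) *\<^sub>R (\<epsilon> i *\<^sub>R axis i (1::real))"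
        by simp
    qed
    also have "\<dots> \<in> L"
      using x convex_cone_scaleR[OF cone _ \<epsilon>(2)] by (intro convex_cone_sum[OF cone]) auto
    finally show "x \<in> L" .
  qed
  then show ?thesis
    using that \<epsilon>(1) by blast
qed

lemma isotone_projection_nonneg_orthant_sign_orthant:
  assumes "\<forall>i. \<epsilon> i \<in> {-1, 1}"
  shows "isotone_projection_set nonneg_orthant {x :: real^'n. \<forall>i. 0 \<le> \<epsilon> i * x $ i}"
proof -
  have "\<epsilon> i * (max (y $ i) 0 - max (x $ i) 0) \<ge> 0" if "0 \<le> \<epsilon> i * (y $ i - x $ i)" for x y :: "real^'n" and i
  proof -
    have "\<epsilon> i = -1 \<or> \<epsilon> i = 1"
      using assms by auto
    then show ?thesis
      using that by (elim disjE) (auto simp: max_def)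
  qed
  moreover have "0 \<in> nonneg_orthant"
    unfolding nonneg_orthant_def by simp
  ultimately show ?thesis
    unfolding isotone_projection_set_def cone_le_def closest_point_nonneg_orthant
    using closed_nonneg_orthant convex_nonneg_orthant by auto
qed

lemma isotone_projection_nonneg_orthant_iff:
  fixes L :: "(real^'n) set"
  assumes "proper_cone L"
  shows "isotone_projection_set nonneg_orthant L \<longleftrightarrow>
    (\<exists>\<epsilon>::'n \<Rightarrow> real. (\<forall>i. \<epsilon> i \<in> {-1, 1}) \<and> L = {x. \<forall>i. \<epsilon> i * x $ i \<ge> 0})"
proof
  assume "isotone_projection_set nonneg_orthant L"
  then obtain \<epsilon> :: "'n \<Rightarrow> real" where "\<forall>i. \<epsilon> i \<in> {-1, 1}" "L = {x. \<forall>i. 0 \<le> \<epsilon> i * x $ i}"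
    using proper_cone_coordinatewise_eq_orthant[OF assms]
      isotone_projection_nonneg_orthant_coordinate by blast
  then show "\<exists>\<epsilon>::'n \<Rightarrow> real. (\<forall>i. \<epsilon> i \<in> {-1, 1}) \<and> L = {x. \<forall>i. \<epsilon> i * x $ i \<ge> 0}"
    by blast
qed (use isotone_projection_nonneg_orthant_sign_orthant in blast)

theorem corollary1:
  shows "(\<forall>(K::(real^'n) set) L.
            self_dual K \<and> proper_cone L \<and> isotone_projection_set K L
            \<and> (interior K \<inter> L \<noteq> {} \<or> interior K \<inter> dual_cone L \<noteq> {})
            \<longrightarrow> (\<exists>A::real^'n^'n. orthogonal_matrix A \<and> K = (\<lambda>x. A *v x) ` nonneg_orthant))
       \<and> (\<forall>L::(real^'n) set. proper_cone L \<longrightarrow>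
            (isotone_projection_set nonneg_orthant L \<longleftrightarrow>
             (\<exists>\<epsilon>::'n \<Rightarrow> real. (\<forall>i. \<epsilon> i \<in> {-1, 1}) \<and> L = {x. \<forall>i. \<epsilon> i * x $ i \<ge> 0})))"
proof (intro conjI allI impI)
  fix K L :: "(real^'n) set"
  assume "self_dual K \<and> proper_cone L \<and> isotone_projection_set K L
    \<and> (interior K \<inter> L \<noteq> {} \<or> interior K \<inter> dual_cone L \<noteq> {})"
  then have self_dual: "self_dual K" and isotone: "isotone_projection_set K L"
    and proper: "proper_cone L"
    and interior: "interior K \<inter> L \<noteq> {} \<or> interior K \<inter> dual_cone L \<noteq> {}"
    by simp_all
  then have "L = K"
    using self_dual_isotone_eq_if_interior_Int[OF self_dual isotone proper]
      self_dual_isotone_eq_if_interior_Int_dual_cone[OF self_dual isotone proper] by blast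
  obtain u where "u \<in> interior K"
    using interior by blast
  then obtain A :: "real^'n^'n" where "orthogonal_matrix A" "K = (\<lambda>x. A *v x) ` nonneg_orthant"
    using self_dual_isotone_eq_orthant_image[OF self_dual] isotone \<open>L = K\<close> by blast
  then show "\<exists>A::real^'n^'n. orthogonal_matrix A \<and> K = (\<lambda>x. A *v x) ` nonneg_orthant"
    by blast
qed (rule isotone_projection_nonneg_orthant_iff)

end
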